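(* Let $s$ and $K$ be probability densities with respect to Lebesgue measure on $\mathbb{R}$, $w>0$, $K_w(y)=w^{-1}K(w^{-1}y)$ and $(K^2)_w(y)=w^{-1}K^2(w^{-1}y)$. Let $X_1,\dots,X_n$ be i.i.d. with density $s$, $P_n=n^{-1}\sum_{i=1}^n\delta_{X_i}$, so that $(K_w\ast P_n)(x)=n^{-1}\sum_{i=1}^nK_w(x-X_i)$, and let $A_w=\{x\in\mathbb{R}:(K_w\ast s)(x)>0\}$. Then: (i) \[ \mathbb{E}_s\left[\left\|\sqrt{K_w\ast P_n}-\sqrt{K_w\ast s}\right\|^2\right]\le\frac{1}{nw}\int_{A_w}\frac{((K^2)_w\ast s)(x)}{(K_w\ast s)(x)}\,dx. \] (ii) If $s$ is supported on an interval of finite length $2L$, then \[ \mathbb{E}_s\left[\left\|\sqrt{K_w\ast P_n}-\sqrt{K_w\ast s}\right\|^2\right]\le\frac{1}{nw}\int\sup_{-L\le z\le L}K\left(\frac{x-z}{w}\right)dx. \] (iii) If $K$ is bounded, nondecreasing on $(-\infty,M_1)$ and nonincreasing on $(M_2,+\infty)$ with $M_1\le M_2$, then \[ \int\sup_{-L\le z\le L}K\left(\frac{x-z}{w}\right)dx\le2L\|K\|_\infty+w\left[(M_2-M_1)\|K\|_\infty+\int_{-\infty}^{M_1}K(x)\,dx+\int_{M_2}^{\infty}K(x)\,dx\right]. \] (iv) In particular, if $s$ is supported on an interval of length $2L$ and $K$ is bounded and unimodal, then \[ \mathbb{E}_s\left[\left\|\sqrt{K_w\ast P_n}-\sqrt{K_w\ast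 s}\right\|^2\right]\le\frac{2L\|K\|_\infty}{nw}+\frac1n. \]
   Context: $\|\cdot\|$ is the $\mathbb{L}_2$-norm with respect to Lebesgue measure and $\ast$ denotes convolution; $\mathbb{E}_s$ is expectation when the $X_i$ have density $s$. *)

theory Defs
  imports "HOL-Probability.Probability"
begin

definition is_density :: "(real \<Rightarrow> real) \<Rightarrow> bool" where
  "is_density f \<longleftrightarrow> f \<in> borel_measurable borel \<and> (\<forall>x. 0 \<le> f x)
     \<and> (\<integral>\<^sup>+ x. ennreal (f x) \<partial>lborel) = 1"

definition scaled :: "(real \<Rightarrow> real) \<Rightarrow> real \<Rightarrow> real \<Rightarrow> real" where
  "scaled K w y = K (y / w) / w"

definition conv :: "(real \<Rightarrow> real) \<Rightarrow> (real \<Rightarrow> real) \<Rightarrow> real \<Rightarrow> ennreal" where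
  "conv f g x = (\<integral>\<^sup>+ y. ennreal (f (x - y) * g y) \<partial>lborel)"

definition emp_conv :: "(real \<Rightarrow> real) \<Rightarrow> real \<Rightarrow> nat \<Rightarrow> (nat \<Rightarrow> real) \<Rightarrow> real \<Rightarrow> real" where
  "emp_conv K w n X x = (\<Sum>i<n. scaled K w (x - X i)) / real n"

definition sample :: "nat \<Rightarrow> (real \<Rightarrow> real) \<Rightarrow> (nat \<Rightarrow> real) measure" where
  "sample n s = PiM {..<n} (\<lambda>_. density lborel (\<lambda>x. ennreal (s x)))"

definition risk :: "(real \<Rightarrow> real) \<Rightarrow> (real \<Rightarrow> real) \<Rightarrow> real \<Rightarrow> nat \<Rightarrow> ennreal" where
  "risk s K w n = (\<integral>\<^sup>+ X. (\<integral>\<^sup>+ x. ennreal ((sqrt (emp_conv K w n X x)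
        - sqrt (enn2real (conv (scaled K w) s x)))\<^sup>2) \<partial>lborel) \<partial>sample n s)"

definition A_set :: "(real \<Rightarrow> real) \<Rightarrow> (real \<Rightarrow> real) \<Rightarrow> real \<Rightarrow> real set" where
  "A_set s K w = {x. conv (scaled K w) s x > 0}"

definition supnorm :: "(real \<Rightarrow> real) \<Rightarrow> real" where
  "supnorm K = (SUP x. \<bar>K x\<bar>)"

end

theory Submission
  imports Defs
begin

text \<open>Fix \<open>x\<close> with \<open>b = (K\<^sub>w \<ast> s)(x) > 0\<close>. The estimator \<open>a = (K\<^sub>w \<ast> P\<^sub>n)(x)\<close> is the
  mean of the i.i.d. variables \<open>K\<^sub>w(x - X\<^sub>i)\<close>, whose expectation is \<open>b\<close>, and
  \<open>(\<surd>a - \<surd>b)\<^sup>2 \<le> (a - b)\<^sup>2 / b\<close>; so the expected loss at \<open>x\<close> is at most the variance of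
  that mean divided by \<open>b\<close>, i.e. at most \<open>E K\<^sub>w(x - X)\<^sup>2 / (n b) = ((K\<^sup>2)\<^sub>w \<ast> s)(x) / (n w b)\<close>.
  Integrating over \<open>x\<close> (Tonelli) gives (i). If \<open>s\<close> lives on \<open>[c - L, c + L]\<close>, one factor
  \<open>K((x - y)/w)\<close> of \<open>(K\<^sup>2)\<^sub>w\<close> is bounded by its supremum over the support, which cancels
  the denominator and gives (ii) after translating by \<open>c\<close>. For (iii), the supremum over
  the translates of a unimodal \<open>K\<close> is a translate of \<open>K\<close> on each of the two tails and is
  bounded by \<open>\<parallel>K\<parallel>\<^sub>\<infinity>\<close> on a middle interval of length \<open>2L + w (M\<^sub>2 - M\<^sub>1)\<close>;
  (iv) is (ii) and (iii) with \<open>M\<^sub>1 = M\<^sub>2\<close> and \<open>\<integral>K = 1\<close>.\<close>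

section \<open>Bounds on a bounded unimodal kernel\<close>

lemma le_supnorm:
  assumes "bdd_above (range K)" and "\<And>x. 0 \<le> K x"
  shows "K x \<le> supnorm K"
proof -
  have "range (\<lambda>x. \<bar>K x\<bar>) = range K" using assms(2) by (simp add: abs_of_nonneg)
  then have "bdd_above (range (\<lambda>x. \<bar>K x\<bar>))" using assms(1) by simp
  then have "\<bar>K x\<bar> \<le> supnorm K" unfolding supnorm_def by (rule cSUP_upper[OF UNIV_I])
  then show ?thesis by simp
qed

text \<open>Left of \<open>w M\<^sub>1 - L\<close> every translate is dominated by the one with \<open>z = -L\<close>,
  right of \<open>w M\<^sub>2 + L\<close> by the one with \<open>z = L\<close>, and in between by the sup norm.\<close>
lemma SUP_translates_le_unimodal:
  fixes K :: "real \<Rightarrow> real"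
  assumes w: "0 < w" and KB: "\<And>x. K x \<le> B"
    and mono_left: "mono_on {..<M1} K" and mono_right: "monotone_on {M2<..} (\<le>) (\<ge>) K"
  shows "(SUP z\<in>{-L..L}. ennreal (K ((x - z) / w)))
    \<le> indicator {..<w * M1 - L} x * ennreal (K ((x + L) / w))
      + indicator {w * M2 + L<..} x * ennreal (K ((x - L) / w))
      + ennreal B * indicator {w * M1 - L..w * M2 + L} x"
    (is "_ \<le> ?left + ?right + ?middle")
proof (rule SUP_least)
  fix z assume z: "z \<in> {-L..L}"
  have bounds: "(x - L) / w \<le> (x - z) / w" "(x - z) / w \<le> (x + L) / w"
    using z w by (auto simp: divide_right_mono)
  consider "x < w * M1 - L" | "w * M2 + L < x" | "x \<in> {w * M1 - L..w * M2 + L}"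
    by force
  then show "ennreal (K ((x - z) / w)) \<le> ?left + ?right + ?middle"
  proof cases
    case 1
    then have "(x + L) / w < M1" using w by (simp add: divide_less_eq mult.commute)
    then have "K ((x - z) / w) \<le> K ((x + L) / w)"
      using bounds by (intro mono_onD[OF mono_left]) auto
    then have "ennreal (K ((x - z) / w)) \<le> ?left" using 1 by (simp add: ennreal_leI)
    then show ?thesis by (metis add.commute add_increasing2 zero_le)
  next
    case 2
    then have "M2 < (x - L) / w" using w by (simp add: less_divide_eq mult.commute)
    then have "K ((x - z) / w) \<le> K ((x - L) / w)"
      using bounds by (intro monotone_onD[OF mono_right]) auto
    then have "ennreal (K ((x - z) / w)) \<le> ?right" using 2 by (simp add: ennreal_leI)
    then show ?thesis by (metis add.commute add_increasing2 zero_le add_increasing)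
  next
    case 3
    then have "ennreal (K ((x - z) / w)) \<le> ?middle" using KB by (simp add: ennreal_leI)
    then show ?thesis by (metis add_increasing zero_le)
  qed
qed

lemma nn_integral_SUP_translates_le_unimodal:
  fixes K :: "real \<Rightarrow> real"
  assumes [measurable]: "K \<in> borel_measurable borel" and K_nonneg: "\<And>x. 0 \<le> K x"
    and w: "0 < w" and L: "0 \<le> L" and M: "M1 \<le> M2" and bdd: "bdd_above (range K)"
    and mono_left: "mono_on {..<M1} K" and mono_right: "monotone_on {M2<..} (\<le>) (\<ge>) K"
  shows "(\<integral>\<^sup>+ x. (SUP z\<in>{-L..L}. ennreal (K ((x - z) / w))) \<partial>lborel)
          \<le> ennreal (2 * L * supnorm K + w * ((M2 - M1) * supnorm K))
             + ennreal w * ((\<integral>\<^sup>+ x. indicator {..M1} x * ennreal (K x) \<partial>lborel)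
                          + (\<integral>\<^sup>+ x. indicator {M2..} x * ennreal (K x) \<partial>lborel))"
proof -
  define B where "B = supnorm K"
  have KB: "K x \<le> B" for x unfolding B_def by (rule le_supnorm[OF bdd K_nonneg])
  have B: "0 \<le> B" using K_nonneg[of 0] KB[of 0] by simp
  define left where "left x = indicator {..<w * M1 - L} x * ennreal (K ((x + L) / w))" for x
  define right where "right x = indicator {w * M2 + L<..} x * ennreal (K ((x - L) / w))" for x
  define middle where "middle x = ennreal B * indicator {w * M1 - L..w * M2 + L} x" for x
  have [measurable]: "left \<in> borel_measurable borel" "right \<in> borel_measurable borel"
    "middle \<in> borel_measurable borel"
    unfolding left_def right_def middle_def by measurable
  have "(\<integral>\<^sup>+ x. (SUP z\<in>{-L..L}. ennreal (K ((x - z) / w))) \<partial>lborel)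
      \<le> (\<integral>\<^sup>+ x. left x + right x + middle x \<partial>lborel)"
    unfolding left_def right_def middle_def
    by (intro nn_integral_mono SUP_translates_le_unimodal[OF w KB mono_left mono_right])
  also have "\<dots> = (\<integral>\<^sup>+ x. left x \<partial>lborel) + (\<integral>\<^sup>+ x. right x \<partial>lborel) + (\<integral>\<^sup>+ x. middle x \<partial>lborel)"
    by (simp add: nn_integral_add)
  also have "(\<integral>\<^sup>+ x. middle x \<partial>lborel) = ennreal (2 * L * B + w * ((M2 - M1) * B))"
  proof -
    have le: "w * M1 - L \<le> w * M2 + L" using w M L by (smt (verit) mult_left_mono)
    then have "(\<integral>\<^sup>+ x. middle x \<partial>lborel) = ennreal B * ennreal (w * M2 + L - (w * M1 - L))"
      unfolding middle_def by (simp add: nn_integral_cmult_indicator)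
    also have "\<dots> = ennreal (2 * L * B + w * ((M2 - M1) * B))"
      using B le by (simp add: ennreal_mult'[symmetric] algebra_simps)
    finally show ?thesis .
  qed
  also have "(\<integral>\<^sup>+ x. left x \<partial>lborel) \<le> ennreal w * (\<integral>\<^sup>+ x. indicator {..M1} x * ennreal (K x) \<partial>lborel)"
  proof -
    have "(\<integral>\<^sup>+ x. left x \<partial>lborel) = ennreal \<bar>w\<bar> * (\<integral>\<^sup>+ x. left (-L + w * x) \<partial>lborel)"
      using w by (intro nn_integral_real_affine) auto
    also have "(\<integral>\<^sup>+ x. left (-L + w * x) \<partial>lborel) \<le> (\<integral>\<^sup>+ x. indicator {..M1} x * ennreal (K x) \<partial>lborel)"
      using w by (intro nn_integral_mono) (auto simp: left_def indicator_def)
    finally show ?thesis using w by (simp add: mult_left_mono)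
  qed
  also have "(\<integral>\<^sup>+ x. right x \<partial>lborel) \<le> ennreal w * (\<integral>\<^sup>+ x. indicator {M2..} x * ennreal (K x) \<partial>lborel)"
  proof -
    have "(\<integral>\<^sup>+ x. right x \<partial>lborel) = ennreal \<bar>w\<bar> * (\<integral>\<^sup>+ x. right (L + w * x) \<partial>lborel)"
      using w by (intro nn_integral_real_affine) auto
    also have "(\<integral>\<^sup>+ x. right (L + w * x) \<partial>lborel) \<le> (\<integral>\<^sup>+ x. indicator {M2..} x * ennreal (K x) \<partial>lborel)"
      using w by (intro nn_integral_mono) (auto simp: right_def indicator_def)
    finally show ?thesis using w by (simp add: mult_left_mono)
  qed
  finally show ?thesis unfolding B_def by (simp add: algebra_simps add_mono distrib_left)
qed

lemma nn_integral_split_at: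
  fixes K :: "real \<Rightarrow> real"
  assumes [measurable]: "K \<in> borel_measurable borel"
  shows "(\<integral>\<^sup>+ x. indicator {..M} x * ennreal (K x) \<partial>lborel)
      + (\<integral>\<^sup>+ x. indicator {M..} x * ennreal (K x) \<partial>lborel) = (\<integral>\<^sup>+ x. ennreal (K x) \<partial>lborel)"
proof -
  have "(\<integral>\<^sup>+ x. indicator {..M} x * ennreal (K x) \<partial>lborel)
      + (\<integral>\<^sup>+ x. indicator {M..} x * ennreal (K x) \<partial>lborel)
      = (\<integral>\<^sup>+ x. indicator {..M} x * ennreal (K x) + indicator {M..} x * ennreal (K x) \<partial>lborel)"
    by (rule nn_integral_add[symmetric]) auto
  also have "\<dots> = (\<integral>\<^sup>+ x. ennreal (K x) \<partial>lborel)"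
    using AE_lborel_singleton[of M]
    by (intro nn_integral_cong_AE) (auto elim!: eventually_mono simp: indicator_def)
  finally show ?thesis .
qed

lemma nn_integral_SUP_translates_le_unimodal_density:
  assumes K: "is_density K" and w: "0 < w" and L: "0 \<le> L" and bdd: "bdd_above (range K)"
    and mono_left: "mono_on {..<M} K" and mono_right: "monotone_on {M<..} (\<le>) (\<ge>) K"
  shows "(\<integral>\<^sup>+ x. (SUP z\<in>{-L..L}. ennreal (K ((x - z) / w))) \<partial>lborel)
    \<le> ennreal (2 * L * supnorm K) + ennreal w"
proof -
  have [measurable]: "K \<in> borel_measurable borel" and "\<And>x. 0 \<le> K x"
    and "(\<integral>\<^sup>+ x. ennreal (K x) \<partial>lborel) = 1"
    using K unfolding is_density_def by auto
  with nn_integral_SUP_translates_le_unimodal[of K w L M M] nn_integral_split_at[of K M]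
  show ?thesis using w L bdd mono_left mono_right by simp
qed

section \<open>Variance of a sample mean\<close>

lemma sqrt_diff_square_le:
  fixes a b :: real
  assumes a: "0 \<le> a" and b: "0 < b"
  shows "(sqrt a - sqrt b)\<^sup>2 \<le> (a - b)\<^sup>2 / b"
proof -
  have ab: "a - b = (sqrt a - sqrt b) * (sqrt a + sqrt b)"
    using a b by (simp add: algebra_simps)
  have "b \<le> (sqrt a + sqrt b)\<^sup>2"
    using a b by (simp add: power2_eq_square algebra_simps)
  then have "(sqrt a - sqrt b)\<^sup>2 * b \<le> (sqrt a - sqrt b)\<^sup>2 * (sqrt a + sqrt b)\<^sup>2"
    by (intro mult_left_mono) auto
  also have "\<dots> = (a - b)\<^sup>2" unfolding ab by (simp add: power_mult_distrib)
  finally show ?thesis using b by (simp add: le_divide_eq)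
qed

lemma nn_integral_PiM_component:
  assumes "prob_space M" and [measurable]: "f \<in> borel_measurable M" and i: "i \<in> I"
  shows "(\<integral>\<^sup>+X. f (X i) \<partial>PiM I (\<lambda>_. M)) = (\<integral>\<^sup>+t. f t \<partial>M)"
proof -
  have "(\<integral>\<^sup>+t. f t \<partial>M) = (\<integral>\<^sup>+t. f t \<partial>distr (PiM I (\<lambda>_. M)) M (\<lambda>X. X i))"
    using distr_PiM_component[of I "\<lambda>_. M" i] assms by simp
  also have "\<dots> = (\<integral>\<^sup>+X. f (X i) \<partial>PiM I (\<lambda>_. M))"
    using i by (subst nn_integral_distr) auto
  finally show ?thesis ..
qed

text \<open>Expanding the square, the cross terms \<open>Z(X\<^sub>i) Z(X\<^sub>j)\<close>, \<open>i \<noteq> j\<close>,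
  have product integrand with a factor \<open>\<integral>Z = 0\<close>.\<close>
lemma (in prob_space) integral_PiM_square_sum_centered:
  fixes Z :: "'a \<Rightarrow> real"
  assumes [measurable]: "Z \<in> borel_measurable M" and Z2: "integrable M (\<lambda>t. (Z t)\<^sup>2)"
    and mean: "expectation Z = 0"
  shows "integrable (PiM {..<n} (\<lambda>_. M)) (\<lambda>X. (\<Sum>i<n. Z (X i))\<^sup>2)"
    and "(\<integral>X. (\<Sum>i<n. Z (X i))\<^sup>2 \<partial>PiM {..<n} (\<lambda>_. M)) = real n * expectation (\<lambda>t. (Z t)\<^sup>2)"
proof -
  interpret product: product_prob_space "\<lambda>_. M" "{..<n}"
    by (simp add: product_prob_space_def product_prob_space_axioms_def product_sigma_finite_def
        prob_space_axioms prob_space_imp_sigma_finite)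
  have Z: "integrable M Z" by (rule square_integrable_imp_integrable) (use Z2 in auto)
  define f where "f i j k t = (if k = i then Z t else 1) * (if k = j then Z t else 1)" for i j k :: nat and t
  have f: "integrable M (f i j k)" for i j k
    unfolding f_def using Z Z2 by (cases "k = i"; cases "k = j") (auto simp: power2_eq_square)
  have square: "(\<Sum>i<n. Z (X i))\<^sup>2 = (\<Sum>i<n. \<Sum>j<n. \<Prod>k\<in>{..<n}. f i j k (X k))" for X
    by (simp add: power2_eq_square sum_product f_def prod.distrib prod.delta)
  have integrable_prod: "integrable (PiM {..<n} (\<lambda>_. M)) (\<lambda>X. \<Prod>k\<in>{..<n}. f i j k (X k))" for i j
    using product.product_integrable_prod[of "{..<n}" "f i j"] f by simp
  have integral_f: "expectation (f i j k) = (if k = i \<and> k = j then expectation (\<lambda>t. (Z t)\<^sup>2)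
      else if k = i \<or> k = j then 0 else 1)" for i j k
    unfolding f_def using mean by (auto simp: power2_eq_square prob_space)
  have integral_prod: "(\<integral>X. (\<Prod>k\<in>{..<n}. f i j k (X k)) \<partial>PiM {..<n} (\<lambda>_. M))
      = (if i = j then expectation (\<lambda>t. (Z t)\<^sup>2) else 0)" if "i < n" "j < n" for i j
  proof -
    have "(\<integral>X. (\<Prod>k\<in>{..<n}. f i j k (X k)) \<partial>PiM {..<n} (\<lambda>_. M)) = (\<Prod>k\<in>{..<n}. expectation (f i j k))"
      using product.product_integral_prod[of "{..<n}" "f i j"] f by simp
    also have "\<dots> = (if i = j then expectation (\<lambda>t. (Z t)\<^sup>2) else 0)"
    proof (cases "i = j")
      case True
      then show ?thesis using that by (simp add: integral_f prod.delta cong: if_cong)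
    next
      case False
      then have "expectation (f i j i) = 0" by (simp add: integral_f)
      with that False show ?thesis by (auto intro!: prod_zero)
    qed
    finally show ?thesis .
  qed
  show "integrable (PiM {..<n} (\<lambda>_. M)) (\<lambda>X. (\<Sum>i<n. Z (X i))\<^sup>2)"
    unfolding square using integrable_prod by (intro Bochner_Integration.integrable_sum) auto
  show "(\<integral>X. (\<Sum>i<n. Z (X i))\<^sup>2 \<partial>PiM {..<n} (\<lambda>_. M)) = real n * expectation (\<lambda>t. (Z t)\<^sup>2)"
    unfolding square using integrable_prod by (simp add: Bochner_Integration.integral_sum integral_prod)
qed

lemma (in prob_space) nn_integral_PiM_sample_mean_deviation_le:
  fixes Y :: "'a \<Rightarrow> real"
  assumes [measurable]: "Y \<in> borel_measurable M" and Y2: "(\<integral>\<^sup>+t. ennreal ((Y t)\<^sup>2) \<partial>M) < \<infinity>"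
    and n: "0 < n"
  shows "(\<integral>\<^sup>+X. ennreal (((\<Sum>i<n. Y (X i)) / real n - expectation Y)\<^sup>2) \<partial>PiM {..<n} (\<lambda>_. M))
     \<le> ennreal (1 / real n) * (\<integral>\<^sup>+t. ennreal ((Y t)\<^sup>2) \<partial>M)"
proof -
  define Z where "Z t = Y t - expectation Y" for t
  have Y2: "integrable M (\<lambda>t. (Y t)\<^sup>2)"
    using Y2 by (intro integrableI_bounded) auto
  have Y: "integrable M Y" by (rule square_integrable_imp_integrable) (use Y2 in auto)
  have Z2: "integrable M (\<lambda>t. (Z t)\<^sup>2)"
    unfolding Z_def power2_diff using Y Y2 by auto
  have variance: "expectation (\<lambda>t. (Z t)\<^sup>2) = expectation (\<lambda>t. (Y t)\<^sup>2) - (expectation Y)\<^sup>2"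
    unfolding Z_def using Y Y2 by (intro variance_eq) auto
  have mean: "expectation Z = 0" unfolding Z_def using Y by (simp add: prob_space)
  have deviation: "((\<Sum>i<n. Y (X i)) / real n - expectation Y)\<^sup>2 = (\<Sum>i<n. Z (X i))\<^sup>2 / (real n)\<^sup>2" for X
    using n by (simp add: Z_def sum_subtractf field_simps)
  have [measurable]: "Z \<in> borel_measurable M" unfolding Z_def by measurable
  note sum_square = integral_PiM_square_sum_centered[OF this Z2 mean]
  have "(\<integral>\<^sup>+X. ennreal (((\<Sum>i<n. Y (X i)) / real n - expectation Y)\<^sup>2) \<partial>PiM {..<n} (\<lambda>_. M))
      = ennreal ((\<integral>X. (\<Sum>i<n. Z (X i))\<^sup>2 \<partial>PiM {..<n} (\<lambda>_. M)) / (real n)\<^sup>2)"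
    unfolding deviation using sum_square(1) by (subst nn_integral_eq_integral) auto
  also have "\<dots> = ennreal (expectation (\<lambda>t. (Z t)\<^sup>2) / real n)"
    using n by (simp only: sum_square(2)) (simp add: power2_eq_square)
  also have "\<dots> \<le> ennreal (expectation (\<lambda>t. (Y t)\<^sup>2) / real n)"
    by (intro ennreal_leI divide_right_mono) (auto simp: variance)
  also have "\<dots> = ennreal (1 / real n) * (\<integral>\<^sup>+t. ennreal ((Y t)\<^sup>2) \<partial>M)"
    using n Y2 by (simp add: ennreal_mult'[symmetric] nn_integral_eq_integral)
  finally show ?thesis .
qed

section \<open>The risk of the kernel estimator\<close>

lemma measurable_conv[measurable]:
  assumes [measurable]: "f \<in> borel_measurable borel" "g \<in> borel_measurable borel"
  shows "conv f g \<in> borel_measurable borel"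
  unfolding conv_def by measurable

lemma nn_integral_scaled_translate:
  assumes K: "is_density K" and w: "0 < w"
  shows "(\<integral>\<^sup>+x. ennreal (scaled K w (x - y)) \<partial>lborel) = 1"
proof -
  have [measurable]: "K \<in> borel_measurable borel" and K_nonneg: "\<And>x. 0 \<le> K x"
    and K_int: "(\<integral>\<^sup>+ x. ennreal (K x) \<partial>lborel) = 1"
    using K unfolding is_density_def by auto
  have "(\<integral>\<^sup>+x. ennreal (scaled K w (x - y)) \<partial>lborel)
      = ennreal \<bar>w\<bar> * (\<integral>\<^sup>+u. ennreal (scaled K w ((y + w * u) - y)) \<partial>lborel)"
    using w by (intro nn_integral_real_affine) (auto simp: scaled_def)
  also have "\<dots> = ennreal w * (\<integral>\<^sup>+u. ennreal (1 / w) * ennreal (K u) \<partial>lborel)"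
    using w K_nonneg
    by (auto simp: scaled_def ennreal_mult[symmetric] intro!: nn_integral_cong arg_cong2[where f="(*)"])
  also have "\<dots> = 1"
    using w K_int by (simp add: nn_integral_cmult mult.assoc[symmetric] ennreal_mult[symmetric])
  finally show ?thesis .
qed

context
  fixes s K :: "real \<Rightarrow> real" and w :: real and n :: nat
  assumes s: "is_density s" and K: "is_density K" and w: "0 < w" and n: "1 \<le> n"
begin

lemma s_measurable[measurable]: "s \<in> borel_measurable borel"
  and s_nonneg: "0 \<le> s x"
  and K_measurable[measurable]: "K \<in> borel_measurable borel"
  and K_nonneg: "0 \<le> K x"
  using s K unfolding is_density_def by auto

definition law :: "real measure" where
  "law = density lborel (\<lambda>x. ennreal (s x))"

lemma prob_space_law: "prob_space law"
  unfolding law_def using s by (intro prob_spaceI) (auto simp: is_density_def emeasure_density)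

lemma sets_law[measurable_cong]: "sets law = sets borel"
  unfolding law_def by simp

lemma sample_eq_PiM_law: "sample n s = PiM {..<n} (\<lambda>_. law)"
  unfolding sample_def law_def ..

lemma nn_integral_law: "(\<integral>\<^sup>+t. f t \<partial>law) = (\<integral>\<^sup>+t. ennreal (s t) * f t \<partial>lborel)"
  if [measurable]: "f \<in> borel_measurable borel" for f
  unfolding law_def by (subst nn_integral_density) auto

definition kernel_at :: "real \<Rightarrow> real \<Rightarrow> real" where
  "kernel_at x t = scaled K w (x - t)"

lemma kernel_at_nonneg: "0 \<le> kernel_at x t"
  unfolding kernel_at_def scaled_def using K_nonneg w by simp

lemma kernel_at_measurable[measurable]: "kernel_at x \<in> borel_measurable borel"
  unfolding kernel_at_def scaled_def by measurable

lemma emp_conv_eq_mean: "emp_conv K w n X x = (\<Sum>i<n. kernel_at x (X i)) / real n"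
  unfolding emp_conv_def kernel_at_def ..

lemma conv_eq_nn_integral_law: "conv (scaled K w) s x = (\<integral>\<^sup>+t. ennreal (kernel_at x t) \<partial>law)"
proof -
  have "(\<integral>\<^sup>+t. ennreal (kernel_at x t) \<partial>law) = (\<integral>\<^sup>+t. ennreal (s t) * ennreal (kernel_at x t) \<partial>lborel)"
    by (rule nn_integral_law) measurable
  then show ?thesis
    unfolding conv_def using s_nonneg kernel_at_nonneg
    by (simp add: kernel_at_def ennreal_mult[symmetric] mult.commute)
qed

lemma conv_square_eq_nn_integral_law:
  "conv (scaled (\<lambda>y. (K y)\<^sup>2) w) s x = ennreal w * (\<integral>\<^sup>+t. ennreal ((kernel_at x t)\<^sup>2) \<partial>law)"
proof -
  have "conv (scaled (\<lambda>y. (K y)\<^sup>2) w) s x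
      = (\<integral>\<^sup>+t. ennreal w * (ennreal (s t) * ennreal ((kernel_at x t)\<^sup>2)) \<partial>lborel)"
    unfolding conv_def using w s_nonneg
    by (intro nn_integral_cong) (auto simp: kernel_at_def scaled_def ennreal_mult[symmetric] power2_eq_square)
  also have "\<dots> = ennreal w * (\<integral>\<^sup>+t. ennreal ((kernel_at x t)\<^sup>2) \<partial>law)"
    by (simp add: nn_integral_cmult nn_integral_law)
  finally show ?thesis .
qed

lemma nn_integral_emp_conv: "(\<integral>\<^sup>+X. ennreal (emp_conv K w n X x) \<partial>sample n s) = conv (scaled K w) s x"
proof -
  have "(\<integral>\<^sup>+X. ennreal (emp_conv K w n X x) \<partial>sample n s)
      = (\<integral>\<^sup>+X. ennreal (1 / real n) * (\<Sum>i<n. ennreal (kernel_at x (X i))) \<partial>PiM {..<n} (\<lambda>_. law))"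
    unfolding sample_eq_PiM_law emp_conv_eq_mean
    by (intro nn_integral_cong) (simp add: kernel_at_nonneg sum_nonneg ennreal_mult[symmetric] sum_ennreal)
  also have "\<dots> = ennreal (1 / real n) * (\<Sum>i<n. (\<integral>\<^sup>+X. ennreal (kernel_at x (X i)) \<partial>PiM {..<n} (\<lambda>_. law)))"
    by (simp add: nn_integral_cmult nn_integral_sum)
  also have "\<dots> = ennreal (1 / real n) * (real n * (\<integral>\<^sup>+t. ennreal (kernel_at x t) \<partial>law))"
  proof -
    have "(\<Sum>i<n. (\<integral>\<^sup>+X. ennreal (kernel_at x (X i)) \<partial>PiM {..<n} (\<lambda>_. law)))
        = (\<Sum>i<n. (\<integral>\<^sup>+t. ennreal (kernel_at x t) \<partial>law))"
      by (intro sum.cong refl nn_integral_PiM_component[OF prob_space_law]) auto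
    then show ?thesis by (simp add: ennreal_of_nat_eq_real_of_nat)
  qed
  also have "\<dots> = conv (scaled K w) s x"
    using n by (simp add: conv_eq_nn_integral_law mult.assoc[symmetric] ennreal_mult[symmetric])
  finally show ?thesis .
qed

lemma AE_conv_finite: "AE x in lborel. conv (scaled K w) s x \<noteq> \<infinity>"
proof (rule nn_integral_noteq_infinite)
  show "conv (scaled K w) s \<in> borel_measurable lborel" unfolding scaled_def by measurable
  have "(\<integral>\<^sup>+x. conv (scaled K w) s x \<partial>lborel)
      = (\<integral>\<^sup>+x. \<integral>\<^sup>+y. ennreal (s y) * ennreal (scaled K w (x - y)) \<partial>lborel \<partial>lborel)"
    unfolding conv_def using w s_nonneg K_nonneg
    by (intro nn_integral_cong) (auto simp: scaled_def ennreal_mult[symmetric] mult.commute)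
  also have "\<dots> = (\<integral>\<^sup>+y. \<integral>\<^sup>+x. ennreal (s y) * ennreal (scaled K w (x - y)) \<partial>lborel \<partial>lborel)"
    by (rule lborel_pair.Fubini') (unfold scaled_def, measurable)
  also have "\<dots> = (\<integral>\<^sup>+y. ennreal (s y) \<partial>lborel)"
    by (intro nn_integral_cong)
      (subst nn_integral_cmult, unfold scaled_def, measurable,
       simp add: nn_integral_scaled_translate[OF K w, unfolded scaled_def])
  also have "\<dots> = 1" using s by (simp add: is_density_def)
  finally show "(\<integral>\<^sup>+x. conv (scaled K w) s x \<partial>lborel) \<noteq> \<infinity>" by simp
qed

lemma integral_law_kernel_at:
  assumes "conv (scaled K w) s x = ennreal b" and "0 \<le> b"
  shows "(\<integral>t. kernel_at x t \<partial>law) = b"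
proof -
  have nn_mean: "(\<integral>\<^sup>+t. ennreal (kernel_at x t) \<partial>law) = ennreal b"
    using conv_eq_nn_integral_law assms(1) by simp
  have "integrable law (kernel_at x)"
    by (rule integrableI_nonneg) (use kernel_at_nonneg nn_mean in auto)
  then have "(\<integral>\<^sup>+t. ennreal (kernel_at x t) \<partial>law) = ennreal (\<integral>t. kernel_at x t \<partial>law)"
    by (intro nn_integral_eq_integral) (auto simp: kernel_at_nonneg)
  then show ?thesis using nn_mean assms(2) by (simp add: integral_nonneg_AE kernel_at_nonneg)
qed

text \<open>Pointwise in \<open>x\<close>: \<open>(\<surd>a - \<surd>b)\<^sup>2 \<le> (a - b)\<^sup>2 / b\<close> reduces the Hellinger-type
  loss to the variance of a sample mean of the \<open>K\<^sub>w(x - X\<^sub>i)\<close>.\<close>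
lemma nn_integral_sample_sqrt_deviation_le:
  assumes finite: "conv (scaled K w) s x \<noteq> \<infinity>"
  shows "(\<integral>\<^sup>+X. ennreal ((sqrt (emp_conv K w n X x) - sqrt (enn2real (conv (scaled K w) s x)))\<^sup>2) \<partial>sample n s)
    \<le> ennreal (1 / (real n * w)) * (indicator (A_set s K w) x *
            (conv (scaled (\<lambda>y. (K y)\<^sup>2) w) s x / conv (scaled K w) s x))"
proof -
  define b where "b = enn2real (conv (scaled K w) s x)"
  have conv_eq: "conv (scaled K w) s x = ennreal b" using finite unfolding b_def by (simp add: less_top)
  have emp_nonneg: "0 \<le> emp_conv K w n X x" for X
    unfolding emp_conv_eq_mean using kernel_at_nonneg by (simp add: sum_nonneg)
  have "0 \<le> b" unfolding b_def by simp
  then consider "b = 0" | "0 < b" by linarith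
  then show ?thesis
  proof cases
    case 1
    then have "(\<integral>\<^sup>+X. ennreal ((sqrt (emp_conv K w n X x) - sqrt b)\<^sup>2) \<partial>sample n s) = 0"
      using nn_integral_emp_conv conv_eq by (simp add: emp_nonneg)
    then show ?thesis by (simp add: b_def)
  next
    case 2
    have in_A: "x \<in> A_set s K w" unfolding A_set_def using conv_eq 2 by simp
    define second_moment where "second_moment = (\<integral>\<^sup>+t. ennreal ((kernel_at x t)\<^sup>2) \<partial>law)"
    have rhs: "ennreal (1 / (real n * w)) * (indicator (A_set s K w) x *
            (conv (scaled (\<lambda>y. (K y)\<^sup>2) w) s x / conv (scaled K w) s x))
        = ennreal (1 / real n) * second_moment * ennreal (1 / b)"
      using 2 w n unfolding indicator_simps(1)[of x, OF in_A] conv_square_eq_nn_integral_law conv_eq second_moment_def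
      by (simp add: divide_ennreal_def inverse_ennreal mult.assoc inverse_eq_divide ennreal_mult[symmetric]
          flip: mult.assoc)
    show ?thesis
    proof (cases "second_moment = \<infinity>")
      case True
      then show ?thesis unfolding rhs using n 2 by (simp add: ennreal_mult_eq_top_iff)
    next
      case False
      interpret law: prob_space law by (rule prob_space_law)
      have mean: "law.expectation (kernel_at x) = b"
        using integral_law_kernel_at conv_eq 2 by simp
      have "(\<integral>\<^sup>+X. ennreal ((sqrt (emp_conv K w n X x) - sqrt b)\<^sup>2) \<partial>sample n s)
          \<le> (\<integral>\<^sup>+X. ennreal (((\<Sum>i<n. kernel_at x (X i)) / real n - b)\<^sup>2) * ennreal (1 / b) \<partial>PiM {..<n} (\<lambda>_. law))"
        unfolding sample_eq_PiM_law
        using sqrt_diff_square_le[OF emp_nonneg 2] 2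
        by (intro nn_integral_mono) (simp add: emp_conv_eq_mean ennreal_mult[symmetric] ennreal_leI)
      also have "\<dots> = (\<integral>\<^sup>+X. ennreal (((\<Sum>i<n. kernel_at x (X i)) / real n - b)\<^sup>2) \<partial>PiM {..<n} (\<lambda>_. law))
          * ennreal (1 / b)"
        by (rule nn_integral_multc) measurable
      also have "\<dots> \<le> ennreal (1 / real n) * second_moment * ennreal (1 / b)"
        using law.nn_integral_PiM_sample_mean_deviation_le[of "kernel_at x" n] False n
        by (intro mult_right_mono) (auto simp: mean second_moment_def less_top)
      finally show ?thesis unfolding rhs b_def .
    qed
  qed
qed

lemma risk_integrand_measurable:
  "(\<lambda>(X, x). ennreal ((sqrt (emp_conv K w n X x) - sqrt (enn2real (conv (scaled K w) s x)))\<^sup>2))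
    \<in> borel_measurable (sample n s \<Otimes>\<^sub>M lborel)"
  unfolding sample_eq_PiM_law emp_conv_def scaled_def by measurable

lemma risk_le_nn_integral_ratio:
  "risk s K w n \<le> ennreal (1 / (real n * w)) *
        (\<integral>\<^sup>+ x. indicator (A_set s K w) x *
            (conv (scaled (\<lambda>y. (K y)\<^sup>2) w) s x / conv (scaled K w) s x) \<partial>lborel)"
proof -
  have "prob_space (sample n s)" unfolding sample_eq_PiM_law by (intro prob_space_PiM prob_space_law)
  then interpret pair_sigma_finite "sample n s" lborel
    by (intro pair_sigma_finite.intro prob_space_imp_sigma_finite lborel.sigma_finite_measure_axioms)
  have "risk s K w n = (\<integral>\<^sup>+ x. \<integral>\<^sup>+ X. ennreal ((sqrt (emp_conv K w n X x)
        - sqrt (enn2real (conv (scaled K w) s x)))\<^sup>2) \<partial>sample n s \<partial>lborel)"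
    unfolding risk_def using risk_integrand_measurable by (subst Fubini') auto
  also have "\<dots> \<le> (\<integral>\<^sup>+ x. ennreal (1 / (real n * w)) * (indicator (A_set s K w) x *
            (conv (scaled (\<lambda>y. (K y)\<^sup>2) w) s x / conv (scaled K w) s x)) \<partial>lborel)"
    using AE_conv_finite
    by (intro nn_integral_mono_AE) (auto elim!: eventually_mono intro: nn_integral_sample_sqrt_deviation_le)
  also have "\<dots> = ennreal (1 / (real n * w)) *
        (\<integral>\<^sup>+ x. indicator (A_set s K w) x *
            (conv (scaled (\<lambda>y. (K y)\<^sup>2) w) s x / conv (scaled K w) s x) \<partial>lborel)"
    by (rule nn_integral_cmult) (unfold A_set_def scaled_def, measurable)
  finally show ?thesis .
qed

text \<open>Since \<open>(K\<^sup>2)\<^sub>w(y) = K(y/w) K\<^sub>w(y)\<close>, bounding the first factor over the support of \<open>s\<close>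
  gives \<open>(K\<^sup>2)\<^sub>w \<ast> s \<le> sup K(\<dots>) \<cdot> (K\<^sub>w \<ast> s)\<close>.\<close>
lemma ratio_le_SUP_translates:
  assumes support: "\<forall>x. x \<notin> {c - L..c + L} \<longrightarrow> s x = 0"
  shows "indicator (A_set s K w) (c + u) *
            (conv (scaled (\<lambda>y. (K y)\<^sup>2) w) s (c + u) / conv (scaled K w) s (c + u))
     \<le> (SUP z\<in>{-L..L}. ennreal (K ((u - z) / w)))"
proof (cases "c + u \<in> A_set s K w \<and> conv (scaled K w) s (c + u) \<noteq> \<infinity>")
  case False
  then show ?thesis by (auto simp: indicator_def)
next
  case True
  define S where "S = (SUP z\<in>{-L..L}. ennreal (K ((u - z) / w)))"
  have "ennreal (scaled (\<lambda>y. (K y)\<^sup>2) w (c + u - t) * s t) \<le> S * ennreal (scaled K w (c + u - t) * s t)"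
    for t
  proof (cases "s t = 0")
    case False
    then have "t \<in> {c - L..c + L}" using support by blast
    then have "t - c \<in> {-L..L}" by auto
    then have "ennreal (K ((u - (t - c)) / w)) \<le> S" unfolding S_def by (rule SUP_upper)
    then have "ennreal (K ((c + u - t) / w)) * ennreal (scaled K w (c + u - t) * s t)
        \<le> S * ennreal (scaled K w (c + u - t) * s t)"
      by (intro mult_right_mono) (auto simp: diff_diff_eq2 add.commute)
    then show ?thesis
      using w K_nonneg s_nonneg by (simp add: scaled_def ennreal_mult[symmetric] power2_eq_square mult.assoc)
  qed simp
  then have "conv (scaled (\<lambda>y. (K y)\<^sup>2) w) s (c + u) \<le> (\<integral>\<^sup>+t. S * ennreal (scaled K w (c + u - t) * s t) \<partial>lborel)"
    unfolding conv_def by (intro nn_integral_mono)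
  also have "\<dots> = S * conv (scaled K w) s (c + u)"
    unfolding conv_def by (rule nn_integral_cmult) (unfold scaled_def, measurable)
  finally have "conv (scaled (\<lambda>y. (K y)\<^sup>2) w) s (c + u) / conv (scaled K w) s (c + u)
      \<le> S * conv (scaled K w) s (c + u) / conv (scaled K w) s (c + u)"
    unfolding divide_ennreal_def by (intro mult_right_mono) auto
  also have "\<dots> = S" using True by (auto simp: ennreal_mult_divide_eq A_set_def)
  finally show ?thesis using True by (simp add: S_def)
qed

lemma risk_le_nn_integral_SUP_translates:
  assumes support: "\<forall>x. x \<notin> {c - L..c + L} \<longrightarrow> s x = 0"
  shows "risk s K w n \<le> ennreal (1 / (real n * w)) *
          (\<integral>\<^sup>+ x. (SUP z\<in>{-L..L}. ennreal (K ((x - z) / w))) \<partial>lborel)"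
proof -
  define ratio where "ratio x = indicator (A_set s K w) x *
      (conv (scaled (\<lambda>y. (K y)\<^sup>2) w) s x / conv (scaled K w) s x)" for x
  have [measurable]: "ratio \<in> borel_measurable borel" unfolding ratio_def A_set_def scaled_def by measurable
  have "(\<integral>\<^sup>+ x. ratio x \<partial>lborel) = ennreal \<bar>1\<bar> * (\<integral>\<^sup>+ u. ratio (c + 1 * u) \<partial>lborel)"
    by (rule nn_integral_real_affine) auto
  also have "\<dots> \<le> (\<integral>\<^sup>+ u. (SUP z\<in>{-L..L}. ennreal (K ((u - z) / w))) \<partial>lborel)"
    using ratio_le_SUP_translates[OF support] by (auto intro!: nn_integral_mono simp: ratio_def)
  finally show ?thesis
    using risk_le_nn_integral_ratio unfolding ratio_def by (meson order_trans mult_left_mono zero_le)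
qed

lemma support_radius_nonneg:
  assumes "\<forall>x. x \<notin> {c - L..c + L} \<longrightarrow> s x = 0"
  shows "0 \<le> L"
proof (rule ccontr)
  assume "\<not> 0 \<le> L"
  then have "s = (\<lambda>_. 0)" using assms by auto
  then show False using s by (simp add: is_density_def)
qed

lemma risk_le_unimodal:
  assumes support: "\<forall>x. x \<notin> {c - L..c + L} \<longrightarrow> s x = 0" and bdd: "bdd_above (range K)"
    and mono_left: "mono_on {..<M} K" and mono_right: "monotone_on {M<..} (\<le>) (\<ge>) K"
  shows "risk s K w n \<le> ennreal (2 * L * supnorm K / (real n * w) + 1 / real n)"
proof -
  have L: "0 \<le> L" by (rule support_radius_nonneg[OF support])
  have B: "0 \<le> supnorm K" using le_supnorm[OF bdd K_nonneg, of 0] K_nonneg[of 0] by linarith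
  have "risk s K w n \<le> ennreal (1 / (real n * w)) * (ennreal (2 * L * supnorm K) + ennreal w)"
    using risk_le_nn_integral_SUP_translates[OF support]
      nn_integral_SUP_translates_le_unimodal_density[OF K w L bdd mono_left mono_right]
    by (meson order_trans mult_left_mono zero_le)
  also have "\<dots> = ennreal (2 * L * supnorm K / (real n * w) + 1 / real n)"
  proof -
    have "ennreal (1 / (real n * w)) * ennreal (2 * L * supnorm K) = ennreal (2 * L * supnorm K / (real n * w))"
      and "ennreal (1 / (real n * w)) * ennreal w = ennreal (1 / real n)"
      using w n L B by (simp_all add: ennreal_mult'[symmetric])
    then show ?thesis using w n L B by (simp add: distrib_left ennreal_plus)
  qed
  finally show ?thesis .
qed

end

theorem lemma3:
  fixes s K :: "real \<Rightarrow> real" and w :: real and n :: nat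
  assumes "is_density s" and "is_density K" and "0 < w" and "1 \<le> n"
  shows
    "risk s K w n \<le> ennreal (1 / (real n * w)) *
        (\<integral>\<^sup>+ x. indicator (A_set s K w) x *
            (conv (scaled (\<lambda>y. (K y)\<^sup>2) w) s x / conv (scaled K w) s x) \<partial>lborel)
   \<and> (\<forall>c L. (\<forall>x. x \<notin> {c - L..c + L} \<longrightarrow> s x = 0) \<longrightarrow>
        risk s K w n \<le> ennreal (1 / (real n * w)) *
          (\<integral>\<^sup>+ x. (SUP z\<in>{-L..L}. ennreal (K ((x - z) / w))) \<partial>lborel))
   \<and> (\<forall>L M1 M2. 0 \<le> L \<and> M1 \<le> M2 \<and> bdd_above (range K)
        \<and> mono_on {..<M1} K \<and> monotone_on {M2<..} (\<le>) (\<ge>) K \<longrightarrow>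
        (\<integral>\<^sup>+ x. (SUP z\<in>{-L..L}. ennreal (K ((x - z) / w))) \<partial>lborel)
          \<le> ennreal (2 * L * supnorm K + w * ((M2 - M1) * supnorm K))
             + ennreal w * ((\<integral>\<^sup>+ x. indicator {..M1} x * ennreal (K x) \<partial>lborel)
                          + (\<integral>\<^sup>+ x. indicator {M2..} x * ennreal (K x) \<partial>lborel)))
   \<and> (\<forall>c L. (\<forall>x. x \<notin> {c - L..c + L} \<longrightarrow> s x = 0) \<and> bdd_above (range K)
        \<and> (\<exists>M. mono_on {..<M} K \<and> monotone_on {M<..} (\<le>) (\<ge>) K) \<longrightarrow>
        risk s K w n \<le> ennreal (2 * L * supnorm K / (real n * w) + 1 / real n))"
  using risk_le_nn_integral_ratio[OF assms] risk_le_nn_integral_SUP_translates[OF assms]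
    nn_integral_SUP_translates_le_unimodal[OF K_measurable[OF assms] K_nonneg[OF assms] \<open>0 < w\<close>]
    risk_le_unimodal[OF assms]
  by blast

end
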